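(* Let $\mathfrak g$ be an $8$-dimensional filiform Lie algebra with associated triple $(4,5,8)$, and let $\alpha_1,\alpha_2,\gamma_1,\gamma_2,\beta_{12},\beta_{22},\beta_{13},\beta_{23},\beta_{33}$ be its parameters with respect to an adapted basis $\{e_h\}$. Then $\alpha_1=0$, $\alpha_2=-\gamma_1$, $\gamma_2=-\tfrac52\beta_{12}$, $\gamma_1\ne0$; moreover $[C^3\mathfrak g,C^3\mathfrak g]=[C^3\mathfrak g,C^4\mathfrak g]=\langle e_2\rangle$, $[C^3\mathfrak g,C^5\mathfrak g]=\{0\}$, $[C^2\mathfrak g,C^2\mathfrak g]=[C^2\mathfrak g,C^3\mathfrak g]=\langle e_2,\beta_{12}e_3\rangle$, $[C^2\mathfrak g,C^4\mathfrak g]=[C^2\mathfrak g,C^5\mathfrak g]=\langle e_2\rangle$, $[C^2\mathfrak g,C^6\mathfrak g]=\{0\}$. Consequently $$\mathrm{HP}_{\mathfrak g}-\mathrm{HP}^{(0)}_{\mathfrak g}=c\,(t^2s^2+t^2s^3+t^3s^2)+(t^2s^4+t^3s^3+t^4s^2)+(t^2s^5+t^3s^4+t^4s^3+t^5s^2),$$ with $c=2$ if $\beta_{12}\ne0$ and $c=1$ if $\beta_{12}=0$; both cases occur, so $\mathrm{HP}$ separates two isomorphism classes of filiform Lie algebras with triple $(4,5,8)$.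
   Context: All Lie algebras are over $\mathbb C$; $C^1\mathfrak g=\mathfrak g$, $C^k\mathfrak g=[C^{k-1}\mathfrak g,\mathfrak g]$. A Lie algebra is filiform if $\dim\mathfrak g=n\ge2$ and $\dim C^k\mathfrak g=n-k$ for $2\le k\le n$. An adapted basis of a filiform $\mathfrak g$ is a basis $\{e_1,\dots,e_n\}$ with $[e_1,e_h]=e_{h-1}$ ($3\le h\le n$), $[e_2,e_h]=0$ ($1\le h\le n$), $[e_3,e_h]=0$ ($2\le h\le n$); then $C^k\mathfrak g=\langle e_2,\dots,e_{n-k+1}\rangle$. For non-model filiform $\mathfrak g$, $z_1=\min\{k\ge4:[e_k,e_n]\ne0\}$, $z_2=\min\{k\ge4:[e_k,e_{k+1}]\ne0\}$ (in any adapted basis) are invariants; $(z_1,z_2,n)$ is the associated triple. $P_h(u)$ is the $h$-th coordinate of $u$ in $\{e_h\}$. General law (known result) for triple $(z_1,z_2,n)$: there are complex numbers $\alpha_i$ ($1\le i\le z_2-z_1+1$), $\gamma_j$ ($1\le j\le n-z_2-1$), $\beta_{k\ell}$ ($2\le\ell\le n-z_2$, $1\le k<z_2-z_1+\ell$), the parameters, with $[e_1,e_h]=e_{h-1}$; $[e_{z_1+i},e_{z_2+1}]=\alpha_1e_{i+2}+\dots+\alpha_{i+1}e_2$ ($0\le i\le z_2-z_1$); $[e_{z_1},e_{z_2+j}]=\alpha_1e_{j+1}+\gamma_1e_j+\dots+\gamma_{j-1}e_2$ ($2\le j\le n-z_2$); $[e_{z_1+k},e_{z_2+\ell}]=\sum_{h=2}^{k+\ell}P_h([e_{z_1+k-1},e_{z_2+\ell}]+[e_{z_1+k},e_{z_2+\ell-1}])e_{h+1}+\beta_{k\ell}e_2$;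 all other brackets $[e_a,e_b]$, $2\le a<b$, zero. For $(4,5,8)$ the parameters are $\alpha_1,\alpha_2,\gamma_1,\gamma_2,\beta_{12},\beta_{22},\beta_{13},\beta_{23},\beta_{33}$. Hilbert polynomial: $\mathrm{HP}_{\mathfrak g}(t,s)=\sum_{k,\ell\ge1}\dim[C^k\mathfrak g,C^\ell\mathfrak g]\,t^ks^\ell$; $\mathrm{HP}^{(0)}_{\mathfrak g}=(n-2)ts+\sum_{2\le k\le n-2}(n-k-1)(t^ks+ts^k)$. *)

theory Defs
  imports Complex_Main "HOL-Library.Function_Algebras"
begin

text \<open>Vectors of an n-dimensional Lie algebra with basis e_1..e_n are coordinate
  functions nat => complex supported on {1..n}; the bracket is determined by
  structure constants c a b h = P_h([e_a,e_b]).\<close>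

type_synonym vect = "nat \<Rightarrow> complex"
type_synonym sconst = "nat \<Rightarrow> nat \<Rightarrow> nat \<Rightarrow> complex"

definition fscale :: "complex \<Rightarrow> vect \<Rightarrow> vect" where
  "fscale a v = (\<lambda>h. a * v h)"

global_interpretation fv: vector_space fscale
  by unfold_locales (auto simp: fscale_def fun_eq_iff algebra_simps)

definition Vn :: "nat \<Rightarrow> vect set" where
  "Vn n = {v. \<forall>h. h \<notin> {1..n} \<longrightarrow> v h = 0}"

definition ev :: "nat \<Rightarrow> vect" where
  "ev a = (\<lambda>h. if h = a then 1 else 0)"

definition lie_br :: "nat \<Rightarrow> sconst \<Rightarrow> vect \<Rightarrow> vect \<Rightarrow> vect" where
  "lie_br n c u v = (\<lambda>h. if h \<in> {1..n}
      then (\<Sum>a\<in>{1..n}. \<Sum>b\<in>{1..n}. u a * v b * c a b h) else 0)"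

definition is_lie_algebra :: "nat \<Rightarrow> sconst \<Rightarrow> bool" where
  "is_lie_algebra n c \<longleftrightarrow>
     (\<forall>x\<in>Vn n. lie_br n c x x = 0) \<and>
     (\<forall>x\<in>Vn n. \<forall>y\<in>Vn n. \<forall>z\<in>Vn n.
        lie_br n c x (lie_br n c y z) + lie_br n c y (lie_br n c z x)
          + lie_br n c z (lie_br n c x y) = 0)"

definition brs :: "nat \<Rightarrow> sconst \<Rightarrow> vect set \<Rightarrow> vect set \<Rightarrow> vect set" where
  "brs n c A B = fv.span {lie_br n c x y | x y. x \<in> A \<and> y \<in> B}"

text \<open>Lower central series: C^1 = g, C^k = [C^(k-1), g] (C^0 unused, set to g).\<close>
fun lcs :: "nat \<Rightarrow> sconst \<Rightarrow> nat \<Rightarrow> vect set" where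
  "lcs n c 0 = Vn n"
| "lcs n c (Suc 0) = Vn n"
| "lcs n c (Suc (Suc k)) = brs n c (lcs n c (Suc k)) (Vn n)"

definition filiform :: "nat \<Rightarrow> sconst \<Rightarrow> bool" where
  "filiform n c \<longleftrightarrow> n \<ge> 2 \<and> fv.dim (Vn n) = n \<and>
     (\<forall>k. 2 \<le> k \<and> k \<le> n \<longrightarrow> fv.dim (lcs n c k) = n - k)"

definition adapted :: "nat \<Rightarrow> sconst \<Rightarrow> bool" where
  "adapted n c \<longleftrightarrow>
     (\<forall>h. 3 \<le> h \<and> h \<le> n \<longrightarrow> lie_br n c (ev 1) (ev h) = ev (h - 1)) \<and>
     (\<forall>h. 1 \<le> h \<and> h \<le> n \<longrightarrow> lie_br n c (ev 2) (ev h) = 0) \<and>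
     (\<forall>h. 2 \<le> h \<and> h \<le> n \<longrightarrow> lie_br n c (ev 3) (ev h) = 0)"

definition lie_iso :: "nat \<Rightarrow> sconst \<Rightarrow> sconst \<Rightarrow> bool" where
  "lie_iso n c1 c2 \<longleftrightarrow> (\<exists>f. bij_betw f (Vn n) (Vn n) \<and>
     (\<forall>x\<in>Vn n. \<forall>y\<in>Vn n. f (x + y) = f x + f y) \<and>
     (\<forall>x\<in>Vn n. \<forall>a. f (fscale a x) = fscale a (f x)) \<and>
     (\<forall>x\<in>Vn n. \<forall>y\<in>Vn n. f (lie_br n c1 x y) = lie_br n c2 (f x) (f y)))"

definition model :: "nat \<Rightarrow> sconst" where
  "model n a b h = (if a = 1 \<and> 3 \<le> b \<and> b \<le> n \<and> h = b - 1 then 1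
                    else if b = 1 \<and> 3 \<le> a \<and> a \<le> n \<and> h = a - 1 then -1 else 0)"

definition non_model :: "nat \<Rightarrow> sconst \<Rightarrow> bool" where
  "non_model n c \<longleftrightarrow> \<not> lie_iso n c (model n)"

definition z1 :: "nat \<Rightarrow> sconst \<Rightarrow> nat" where
  "z1 n c = (LEAST k. 4 \<le> k \<and> lie_br n c (ev k) (ev n) \<noteq> 0)"

definition z2 :: "nat \<Rightarrow> sconst \<Rightarrow> nat" where
  "z2 n c = (LEAST k. 4 \<le> k \<and> lie_br n c (ev k) (ev (k + 1)) \<noteq> 0)"

text \<open>General law for the triple (4,5,8) with parameters
  a1 a2 (alpha), g1 g2 (gamma), b12 b22 b13 b23 b33 (beta).\<close>
definition law_rec :: "(nat \<Rightarrow> nat \<Rightarrow> vect) \<Rightarrow> nat \<Rightarrow> nat \<Rightarrow> complex \<Rightarrow> vect" where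
  "law_rec B k l b = (\<Sum>h\<in>{2..k+l}. fscale ((B (4+k-1) (5+l) + B (4+k) (5+l-1)) h) (ev (h+1)))
                      + fscale b (ev 2)"

definition law458 :: "sconst \<Rightarrow> complex \<Rightarrow> complex \<Rightarrow> complex \<Rightarrow> complex \<Rightarrow> complex \<Rightarrow> complex
    \<Rightarrow> complex \<Rightarrow> complex \<Rightarrow> complex \<Rightarrow> bool" where
  "law458 c a1 a2 g1 g2 b12 b22 b13 b23 b33 \<longleftrightarrow>
    (let B = (\<lambda>a b. lie_br 8 c (ev a) (ev b)) in
     (\<forall>h. 3 \<le> h \<and> h \<le> 8 \<longrightarrow> B 1 h = ev (h - 1)) \<and>
     B 4 6 = fscale a1 (ev 2) \<and>
     B 5 6 = fscale a1 (ev 3) + fscale a2 (ev 2) \<and>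
     B 4 7 = fscale a1 (ev 3) + fscale g1 (ev 2) \<and>
     B 4 8 = fscale a1 (ev 4) + fscale g1 (ev 3) + fscale g2 (ev 2) \<and>
     B 5 7 = law_rec B 1 2 b12 \<and>
     B 6 7 = law_rec B 2 2 b22 \<and>
     B 5 8 = law_rec B 1 3 b13 \<and>
     B 6 8 = law_rec B 2 3 b23 \<and>
     B 7 8 = law_rec B 3 3 b33 \<and>
     (\<forall>a b. 2 \<le> a \<and> a < b \<and> b \<le> 8 \<and>
        (a, b) \<notin> {(4,6),(5,6),(4,7),(4,8),(5,7),(6,7),(5,8),(6,8),(7,8)} \<longrightarrow> B a b = 0))"

text \<open>Hilbert polynomial as its coefficient array: coefficient of t^k s^l.\<close>
definition HP :: "nat \<Rightarrow> sconst \<Rightarrow> nat \<Rightarrow> nat \<Rightarrow> int" where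
  "HP n c k l = (if 1 \<le> k \<and> 1 \<le> l then int (fv.dim (brs n c (lcs n c k) (lcs n c l))) else 0)"

definition HP0 :: "nat \<Rightarrow> nat \<Rightarrow> nat \<Rightarrow> int" where
  "HP0 n k l = (if k = 1 \<and> l = 1 then int n - 2
     else if l = 1 \<and> 2 \<le> k \<and> k + 2 \<le> n then int n - int k - 1
     else if k = 1 \<and> 2 \<le> l \<and> l + 2 \<le> n then int n - int l - 1
     else 0)"

text \<open>Monomial t^i s^j as coefficient array.\<close>
definition mon :: "nat \<Rightarrow> nat \<Rightarrow> nat \<Rightarrow> nat \<Rightarrow> int" where
  "mon i j k l = (if k = i \<and> l = j then 1 else 0)"

definition fil458 :: "sconst \<Rightarrow> complex \<Rightarrow> complex \<Rightarrow> complex \<Rightarrow> complex \<Rightarrow> complex \<Rightarrow> complex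
    \<Rightarrow> complex \<Rightarrow> complex \<Rightarrow> complex \<Rightarrow> bool" where
  "fil458 c a1 a2 g1 g2 b12 b22 b13 b23 b33 \<longleftrightarrow>
     is_lie_algebra 8 c \<and> filiform 8 c \<and> adapted 8 c \<and> non_model 8 c \<and>
     z1 8 c = 4 \<and> z2 8 c = 5 \<and> law458 c a1 a2 g1 g2 b12 b22 b13 b23 b33"

end

theory Submission
  imports Defs
begin

text \<open>
  The Jacobi identity on \<open>(e\<^sub>4, e\<^sub>6, e\<^sub>8)\<close>, \<open>(e\<^sub>5, e\<^sub>7, e\<^sub>8)\<close> and \<open>(e\<^sub>6, e\<^sub>7, e\<^sub>8)\<close>, read off at \<open>e\<^sub>2\<close>, gives
  \<open>\<alpha>\<^sub>1 = 0\<close>, \<open>\<alpha>\<^sub>2 = -\<gamma>\<^sub>1\<close> and \<open>\<gamma>\<^sub>1 (2\<gamma>\<^sub>2 + 5\<beta>\<^sub>1\<^sub>2) = 0\<close>. If \<open>\<gamma>\<^sub>1 = 0\<close>, all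
  \<open>[e\<^sub>k, e\<^sub>k\<^sub>+\<^sub>1]\<close> vanish, which for a non-model algebra contradicts \<open>z\<^sub>2 = 5\<close>. So the law is
  a normal form depending on \<open>\<gamma>\<^sub>1 \<noteq> 0\<close> and the \<open>\<beta>\<close>'s, in which \<open>C\<^sup>k = \<langle>e\<^sub>2, \<dots>, e\<^sub>9\<^sub>-\<^sub>k\<rangle>\<close> and
  \<open>[C\<^sup>k, C\<^sup>l]\<close> is spanned by \<open>e\<^sub>2\<close> (from \<open>[e\<^sub>9\<^sub>-\<^sub>k, e\<^sub>k\<^sub>+\<^sub>2] = \<plusminus>\<gamma>\<^sub>1 e\<^sub>2\<close>) for \<open>k + l \<le> 7\<close> and
  additionally by \<open>e\<^sub>3\<close> (from \<open>[e\<^sub>6, e\<^sub>7] = \<beta>\<^sub>2\<^sub>2 e\<^sub>2 + \<beta>\<^sub>1\<^sub>2 e\<^sub>3\<close>) for \<open>k + l \<le> 5\<close> and \<open>\<beta>\<^sub>1\<^sub>2 \<noteq> 0\<close>.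
  The algebras with \<open>\<beta>\<^sub>1\<^sub>2 = 1\<close> and \<open>\<beta>\<^sub>1\<^sub>2 = 0\<close> are not isomorphic: in the first,
  \<open>[[\<g>, \<g>], [\<g>, \<g>]]\<close> contains \<open>e\<^sub>2\<close> and \<open>e\<^sub>3\<close>, in the second it lies in \<open>\<langle>e\<^sub>2\<rangle>\<close>.
\<close>

section \<open>Coordinate vectors\<close>

lemma sum_fun_apply: "(sum f A :: vect) x = (\<Sum>a\<in>A. f a x)"
  by (induction A rule: infinite_finite_induct) auto

lemma fscale_apply: "fscale a v h = a * v h"
  by (simp add: fscale_def)

lemma ev_apply: "ev a h = (if h = a then 1 else 0)"
  by (simp add: ev_def)

lemma fscale_0 [simp]: "fscale 0 v = 0"
  and fscale_1 [simp]: "fscale 1 v = v"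
  by (simp_all add: fscale_def fun_eq_iff)

lemma span_ev_eq:
  assumes "finite R"
  shows "fv.span (ev ` R) = {v. \<forall>h. h \<notin> R \<longrightarrow> v h = 0}"
proof
  show "fv.span (ev ` R) \<subseteq> {v. \<forall>h. h \<notin> R \<longrightarrow> v h = 0}"
    by (rule fv.span_minimal) (auto simp: fv.subspace_def ev_def fscale_apply)
  show "{v. \<forall>h. h \<notin> R \<longrightarrow> v h = 0} \<subseteq> fv.span (ev ` R)"
  proof
    fix v :: vect
    assume "v \<in> {v. \<forall>h. h \<notin> R \<longrightarrow> v h = 0}"
    then have "v = (\<Sum>r\<in>R. fscale (v r) (ev r))"
      using assms by (auto simp: fun_eq_iff sum_fun_apply fscale_apply ev_apply if_distrib cong: if_cong)
    also have "\<dots> \<in> fv.span (ev ` R)"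
      by (intro fv.span_sum fv.span_scale fv.span_base) auto
    finally show "v \<in> fv.span (ev ` R)" .
  qed
qed

lemma Vn_eq_span_ev: "Vn n = fv.span (ev ` {1..n})"
  by (simp add: span_ev_eq Vn_def)

lemma ev_in_Vn: "a \<in> {1..n} \<Longrightarrow> ev a \<in> Vn n"
  by (auto simp: Vn_def ev_apply)

lemma zero_in_Vn: "0 \<in> Vn n"
  by (simp add: Vn_def)

lemma inj_ev: "inj ev"
  by (auto simp: inj_def ev_def fun_eq_iff)

lemma independent_ev:
  assumes "finite R"
  shows "fv.independent (ev ` R)"
proof (rule fv.independent_if_scalars_zero)
  show "finite (ev ` R)" using assms by simp
  fix f x
  assume s: "(\<Sum>x\<in>ev ` R. fscale (f x) x) = 0" and x: "x \<in> ev ` R"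
  then obtain r where r: "r \<in> R" "x = ev r" by auto
  have "(\<Sum>q\<in>R. fscale (f (ev q)) (ev q) r) = 0"
    using fun_cong[OF s, of r] by (simp add: sum_fun_apply sum.reindex inj_on_subset[OF inj_ev])
  then show "f x = 0"
    using r assms by (simp add: fscale_apply ev_apply if_distrib cong: if_cong)
qed

lemma dim_ev_image: "finite R \<Longrightarrow> fv.dim (ev ` R) = card R"
  by (simp add: fv.dim_eq_card_independent independent_ev card_image inj_on_subset[OF inj_ev])

lemma dim_Vn: "fv.dim (Vn n) = n"
  by (simp add: Vn_eq_span_ev dim_ev_image)

lemma span_ev2_scaled_ev3:
  "fv.span {ev 2, fscale b (ev 3)} = fv.span (ev ` (if b = 0 then {2} else {2, 3}))"
proof (cases "b = 0")
  case True
  then show ?thesis by (simp add: insert_commute)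
next
  case False
  have "fscale (1/b) (fscale b (ev 3)) = ev 3"
    using False by (simp add: fscale_def)
  then have "ev 3 \<in> fv.span {ev 2, fscale b (ev 3)}"
    by (metis fv.span_base fv.span_scale insertCI)
  moreover have "fscale b (ev 3) \<in> fv.span {ev 2, ev 3}"
    by (intro fv.span_scale fv.span_base) simp
  ultimately show ?thesis
    using False unfolding fv.span_eq by (auto intro: fv.span_base)
qed

lemma linear_inj_on_Vn_not_two_ev_into_line:
  assumes inj: "inj_on f (Vn n)"
    and add: "\<forall>x\<in>Vn n. \<forall>y\<in>Vn n. f (x + y) = f x + f y"
    and scale: "\<forall>x\<in>Vn n. \<forall>a. f (fscale a x) = fscale a (f x)"
    and ij: "i \<in> {1..n}" "j \<in> {1..n}" "i \<noteq> j"
    and fi: "f (ev i) \<in> fv.span {w}" and fj: "f (ev j) \<in> fv.span {w}"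
  shows False
proof -
  obtain mu la where mu: "f (ev i) = fscale mu w" and la: "f (ev j) = fscale la w"
    using fi fj unfolding fv.span_singleton by blast
  have f0: "f 0 = 0"
    using add zero_in_Vn by (metis add.right_neutral add_left_imp_eq)
  let ?x = "fscale la (ev i) + fscale (-mu) (ev j)"
  have V: "ev i \<in> Vn n" "ev j \<in> Vn n" "fscale la (ev i) \<in> Vn n" "fscale (-mu) (ev j) \<in> Vn n" "?x \<in> Vn n"
    using ij by (auto simp: Vn_def fscale_apply ev_apply)
  have "f ?x = fscale la (f (ev i)) + fscale (-mu) (f (ev j))"
    by (simp only: add[rule_format, OF V(3,4)] scale[rule_format, OF V(1)] scale[rule_format, OF V(2)])
  also have "\<dots> = f 0"
    unfolding mu la f0 by (simp add: fscale_def fun_eq_iff)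
  finally have "?x j = 0"
    using inj_onD[OF inj _ V(5) zero_in_Vn] by simp
  then have "f (ev i) = f 0"
    using mu f0 ij by (simp add: fscale_apply ev_apply)
  then have "ev i = 0"
    using inj_onD[OF inj _ V(1) zero_in_Vn] by simp
  then show False
    by (metis ev_apply one_neq_zero zero_fun_apply)
qed

section \<open>Brackets and structure constants\<close>

lemma lie_br_add_left: "lie_br n c (u + w) v = lie_br n c u v + lie_br n c w v"
  and lie_br_add_right: "lie_br n c v (u + w) = lie_br n c v u + lie_br n c v w"
  and lie_br_scale_left: "lie_br n c (fscale a u) v = fscale a (lie_br n c u v)"
  and lie_br_scale_right: "lie_br n c u (fscale a v) = fscale a (lie_br n c u v)"
  by (auto simp: lie_br_def fun_eq_iff algebra_simps sum.distrib sum_distrib_left fscale_apply)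

lemma lie_br_zero_left [simp]: "lie_br n c 0 v = 0"
  and lie_br_zero_right [simp]: "lie_br n c v 0 = 0"
  by (auto simp: lie_br_def fun_eq_iff)

lemma lie_br_outside: "h \<notin> {1..n} \<Longrightarrow> lie_br n c u v h = 0"
  by (auto simp: lie_br_def)

lemma lie_br_in_Vn: "lie_br n c x y \<in> Vn n"
  by (simp add: Vn_def lie_br_outside)

lemma ev_mult: "ev a b * x = (if b = a then x else 0)" "x * ev a b = (if b = a then x else 0)"
  by (auto simp: ev_apply)

lemma lie_br_ev_left:
  assumes "a \<in> {1..n}"
  shows "lie_br n c (ev a) v = (\<lambda>h. if h \<in> {1..n} then \<Sum>b\<in>{1..n}. v b * c a b h else 0)"
proof -
  have "(\<Sum>b\<in>{1..n}. ev a a' * v b * c a' b h) = (if a' = a then \<Sum>b\<in>{1..n}. v b * c a b h else 0)"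
    for a' h
    by (auto simp: ev_apply)
  then show ?thesis
    using assms by (simp add: lie_br_def fun_eq_iff)
qed

lemma lie_br_ev_ev:
  "a \<in> {1..n} \<Longrightarrow> b \<in> {1..n} \<Longrightarrow> lie_br n c (ev a) (ev b) h = (if h \<in> {1..n} then c a b h else 0)"
  by (simp add: lie_br_ev_left ev_mult)

lemma lie_br_cong:
  "(\<And>a b h. a \<in> {1..n} \<Longrightarrow> b \<in> {1..n} \<Longrightarrow> h \<in> {1..n} \<Longrightarrow> c a b h = c' a b h)
   \<Longrightarrow> lie_br n c = lie_br n c'"
  by (auto simp: lie_br_def fun_eq_iff intro!: sum.cong)

lemma lie_iso_of_sc_eq:
  assumes "\<And>a b h. a \<in> {1..n} \<Longrightarrow> b \<in> {1..n} \<Longrightarrow> h \<in> {1..n} \<Longrightarrow> c a b h = c' a b h"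
  shows "lie_iso n c c'"
  unfolding lie_iso_def using lie_br_cong[OF assms] by (intro exI[of _ id]) (simp add: bij_betw_id)

lemma lcs_brs_HP_cong:
  assumes "lie_br n c = lie_br n c'"
  shows "brs n c = brs n c'" and "lcs n c = lcs n c'" and "HP n c = HP n c'"
proof -
  show brs: "brs n c = brs n c'"
    using assms by (simp add: brs_def fun_eq_iff)
  have Suc: "lcs n c (Suc k) = lcs n c' (Suc k)" for k
    by (induction k) (simp_all add: brs)
  show lcs: "lcs n c = lcs n c'"
  proof
    show "lcs n c k = lcs n c' k" for k
      by (cases k) (simp_all add: Suc)
  qed
  show "HP n c = HP n c'"
    by (simp add: HP_def brs lcs fun_eq_iff)
qed

lemma lie_br_mem_span_brackets:
  assumes x: "x \<in> fv.span A" and y: "y \<in> fv.span B"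
  shows "lie_br n c x y \<in> fv.span {lie_br n c x y | x y. x \<in> A \<and> y \<in> B}"
proof -
  let ?G = "fv.span {lie_br n c x y | x y. x \<in> A \<and> y \<in> B}"
  have left: "lie_br n c x y \<in> ?G" if "x \<in> A" for x
    using y
  proof (induction rule: fv.span_induct_alt)
    case (step b y1 y2)
    have "lie_br n c x y1 \<in> ?G"
      using step.hyps(1) that by (blast intro: fv.span_base)
    then show ?case
      unfolding lie_br_add_right lie_br_scale_right by (intro fv.span_add fv.span_scale step.IH)
  qed (metis fv.span_zero lie_br_zero_left lie_br_zero_right)
  from x show ?thesis
  proof (induction rule: fv.span_induct_alt)
    case (step a x1 x2)
    then show ?case
      unfolding lie_br_add_left lie_br_scale_left by (intro fv.span_add fv.span_scale step.IH left step.hyps)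
  qed (metis fv.span_zero lie_br_zero_left lie_br_zero_right)
qed

lemma brs_span_span:
  "brs n c (fv.span A) (fv.span B) = fv.span {lie_br n c x y | x y. x \<in> A \<and> y \<in> B}"
  unfolding brs_def
proof (rule antisym)
  show "fv.span {lie_br n c x y |x y. x \<in> fv.span A \<and> y \<in> fv.span B}
    \<subseteq> fv.span {lie_br n c x y |x y. x \<in> A \<and> y \<in> B}"
    by (rule fv.span_minimal) (auto intro: lie_br_mem_span_brackets)
  show "fv.span {lie_br n c x y |x y. x \<in> A \<and> y \<in> B}
    \<subseteq> fv.span {lie_br n c x y |x y. x \<in> fv.span A \<and> y \<in> fv.span B}"
    by (rule fv.span_mono) (auto intro: fv.span_base)
qed

lemma span_brackets_ev_eq:
  assumes "finite R" and AB: "A \<subseteq> {1..n}" "B \<subseteq> {1..n}"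
    and supp: "\<And>a b h. a \<in> A \<Longrightarrow> b \<in> B \<Longrightarrow> h \<in> {1..n} \<Longrightarrow> h \<notin> R \<Longrightarrow> c a b h = 0"
    and gen: "\<And>r. r \<in> R \<Longrightarrow> ev r \<in> fv.span {lie_br n c x y | x y. x \<in> ev ` A \<and> y \<in> ev ` B}"
  shows "fv.span {lie_br n c x y | x y. x \<in> ev ` A \<and> y \<in> ev ` B} = fv.span (ev ` R)"
proof
  show "fv.span {lie_br n c x y | x y. x \<in> ev ` A \<and> y \<in> ev ` B} \<subseteq> fv.span (ev ` R)"
  proof (rule fv.span_minimal)
    show "{lie_br n c x y | x y. x \<in> ev ` A \<and> y \<in> ev ` B} \<subseteq> fv.span (ev ` R)"
      using AB supp by (auto simp: span_ev_eq[OF \<open>finite R\<close>] lie_br_ev_ev subset_iff)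
  qed (rule fv.subspace_span)
  show "fv.span (ev ` R) \<subseteq> fv.span {lie_br n c x y | x y. x \<in> ev ` A \<and> y \<in> ev ` B}"
    by (rule fv.span_minimal) (use gen in auto)
qed

lemma ev_in_span_brackets:
  assumes "a \<in> A" "b \<in> B" "lie_br n c (ev a) (ev b) = fscale s (ev r)" "s \<noteq> 0"
  shows "ev r \<in> fv.span {lie_br n c x y | x y. x \<in> ev ` A \<and> y \<in> ev ` B}"
proof -
  have "fscale s (ev r) \<in> fv.span {lie_br n c x y | x y. x \<in> ev ` A \<and> y \<in> ev ` B}"
    using assms by (intro fv.span_base) force
  then have "fscale (1/s) (fscale s (ev r)) \<in> fv.span {lie_br n c x y | x y. x \<in> ev ` A \<and> y \<in> ev ` B}"
    by (rule fv.span_scale)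
  then show ?thesis
    using assms(4) by (simp add: fscale_def)
qed

lemma lie_br_antisym:
  assumes "\<And>a b h. c a b h = - c b a h"
  shows "lie_br n c x y = - lie_br n c y x"
proof
  fix h
  have "(\<Sum>a\<in>{1..n}. \<Sum>b\<in>{1..n}. x a * y b * c a b h)
      = (\<Sum>b\<in>{1..n}. \<Sum>a\<in>{1..n}. - (y b * x a * c b a h))"
    by (subst sum.swap) (intro sum.cong refl, subst assms, simp)
  then show "lie_br n c x y h = (- lie_br n c y x) h"
    by (simp add: lie_br_def sum_negf)
qed

lemma brs_commute:
  assumes "\<And>a b h. c a b h = - c b a h"
  shows "brs n c X Y = brs n c Y X"
proof -
  have swap: "{lie_br n c x y | x y. x \<in> X \<and> y \<in> Y} \<subseteq> fv.span {lie_br n c x y | x y. x \<in> Y \<and> y \<in> X}"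
    for X Y
  proof
    fix v
    assume "v \<in> {lie_br n c x y | x y. x \<in> X \<and> y \<in> Y}"
    then obtain x y where "x \<in> X" "y \<in> Y" "v = - lie_br n c y x"
      using lie_br_antisym[of c, OF assms] by blast
    then show "v \<in> fv.span {lie_br n c x y | x y. x \<in> Y \<and> y \<in> X}"
      by (blast intro: fv.span_neg fv.span_base)
  qed
  show ?thesis
    unfolding brs_def fv.span_eq using swap by blast
qed

section \<open>The Jacobi identity in coordinates\<close>

definition jacobi_sum :: "nat \<Rightarrow> sconst \<Rightarrow> nat \<Rightarrow> nat \<Rightarrow> nat \<Rightarrow> nat \<Rightarrow> complex" where
  "jacobi_sum n c a b d h =
     (\<Sum>j\<in>{1..n}. c b d j * c a j h + c d a j * c b j h + c a b j * c d j h)"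

lemma lie_br_lie_br_ev:
  assumes "a \<in> {1..n}" "b \<in> {1..n}" "d \<in> {1..n}" "h \<in> {1..n}"
  shows "lie_br n c (ev a) (lie_br n c (ev b) (ev d)) h = (\<Sum>j\<in>{1..n}. c b d j * c a j h)"
  using assms by (auto simp: lie_br_ev_left ev_mult intro!: sum.cong)

lemma jacobi_sum_eq_0:
  assumes lie: "is_lie_algebra n c" and "a \<in> {1..n}" "b \<in> {1..n}" "d \<in> {1..n}" "h \<in> {1..n}"
  shows "jacobi_sum n c a b d h = 0"
proof -
  have "(lie_br n c (ev a) (lie_br n c (ev b) (ev d)) + lie_br n c (ev b) (lie_br n c (ev d) (ev a))
      + lie_br n c (ev d) (lie_br n c (ev a) (ev b))) h = 0"
    using lie assms ev_in_Vn unfolding is_lie_algebra_def by (metis zero_fun_apply)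
  then show ?thesis
    using assms by (simp add: lie_br_lie_br_ev jacobi_sum_def sum.distrib)
qed

lemma sc_alternating:
  assumes "is_lie_algebra n c" "a \<in> {1..n}" "h \<in> {1..n}"
  shows "c a a h = 0"
  using assms lie_br_ev_ev[of a n a c h] ev_in_Vn[of a n] unfolding is_lie_algebra_def
  by (metis zero_fun_apply)

lemma lie_br_antisym_of_lie:
  assumes lie: "is_lie_algebra n c" and "x \<in> Vn n" "y \<in> Vn n"
  shows "lie_br n c x y = - lie_br n c y x"
proof -
  have "x + y \<in> Vn n"
    using assms by (simp add: Vn_def)
  then have "lie_br n c (x + y) (x + y) = 0"
    using lie unfolding is_lie_algebra_def by blast
  moreover have "lie_br n c x x = 0" "lie_br n c y y = 0"
    using lie assms unfolding is_lie_algebra_def by blast+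
  ultimately show ?thesis
    by (simp add: lie_br_add_left lie_br_add_right eq_neg_iff_add_eq_0 add.commute)
qed

lemma sc_antisym:
  assumes lie: "is_lie_algebra n c" and "a \<in> {1..n}" "b \<in> {1..n}" "h \<in> {1..n}"
  shows "c a b h = - c b a h"
  using fun_cong[OF lie_br_antisym_of_lie[OF lie ev_in_Vn ev_in_Vn], of a b h] assms
  by (simp add: lie_br_ev_ev)

lemma jacobi_sum_cycle: "jacobi_sum n c a b d h = jacobi_sum n c b d a h"
  unfolding jacobi_sum_def by (rule sum.cong) (simp_all add: add_ac)

context
  fixes c :: sconst
  assumes antisym: "\<And>a b h. c a b h = - c b a h"
begin

lemma jacobi_sum_swap: "jacobi_sum n c b a d h = - jacobi_sum n c a b d h"
  unfolding jacobi_sum_def sum_negf[symmetric]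
  by (rule sum.cong) (simp_all add: antisym[of b a] antisym[of d b] antisym[of a d] algebra_simps)

lemma jacobi_sum_repeat: "jacobi_sum n c a a d h = 0"
proof -
  have "c a a j = 0" for j
    using antisym[of a a j] by simp
  then show ?thesis
    unfolding jacobi_sum_def by (intro sum.neutral) (simp add: antisym[of d a])
qed

lemma jacobi_sum_eq_0_of_sorted:
  assumes sorted: "\<And>a b d. a \<in> {1..n} \<Longrightarrow> b \<in> {1..n} \<Longrightarrow> d \<in> {1..n} \<Longrightarrow> a < b \<Longrightarrow> b < d \<Longrightarrow>
      jacobi_sum n c a b d h = 0"
    and "a \<in> {1..n}" "b \<in> {1..n}" "d \<in> {1..n}"
  shows "jacobi_sum n c a b d h = 0"
proof -
  have repeat: "jacobi_sum n c a a d h = 0" "jacobi_sum n c a b b h = 0" "jacobi_sum n c a b a h = 0"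
    for a b d
    using jacobi_sum_repeat jacobi_sum_cycle by metis+
  have swap: "jacobi_sum n c a b d h = 0 \<longleftrightarrow> jacobi_sum n c b a d h = 0" for a b d
    using jacobi_sum_swap[of n b a d h] by auto
  consider "a < b \<and> b < d" | "a < d \<and> d < b" | "b < a \<and> a < d" | "b < d \<and> d < a" | "d < a \<and> a < b"
    | "d < b \<and> b < a" | "a = b \<or> b = d \<or> a = d"
    by arith
  then show ?thesis
    using sorted[of a b d] sorted[of a d b] sorted[of b a d] sorted[of b d a] sorted[of d a b]
      sorted[of d b a] assms(2-4) repeat swap jacobi_sum_cycle
    by cases metis+
qed

end

lemma sum_rotate3: "(\<Sum>i\<in>X. \<Sum>j\<in>Y. \<Sum>k\<in>Z. f i j k) = (\<Sum>j\<in>Y. \<Sum>k\<in>Z. \<Sum>i\<in>X. f i j k)"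
proof -
  have "(\<Sum>i\<in>X. \<Sum>j\<in>Y. \<Sum>k\<in>Z. f i j k) = (\<Sum>j\<in>Y. \<Sum>i\<in>X. \<Sum>k\<in>Z. f i j k)"
    by (rule sum.swap)
  also have "\<dots> = (\<Sum>j\<in>Y. \<Sum>k\<in>Z. \<Sum>i\<in>X. f i j k)"
    by (rule sum.cong[OF refl], rule sum.swap)
  finally show ?thesis .
qed

lemma lie_br_lie_br_expand:
  assumes "h \<in> {1..n}"
  shows "lie_br n c x (lie_br n c y z) h =
    (\<Sum>a\<in>{1..n}. \<Sum>a'\<in>{1..n}. \<Sum>b'\<in>{1..n}. x a * y a' * z b' * (\<Sum>b\<in>{1..n}. c a' b' b * c a b h))"
proof -
  have "lie_br n c x (lie_br n c y z) h =
     (\<Sum>a\<in>{1..n}. \<Sum>b\<in>{1..n}. \<Sum>a'\<in>{1..n}. \<Sum>b'\<in>{1..n}. x a * y a' * z b' * (c a' b' b * c a b h))"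
    using assms by (auto simp: lie_br_def sum_distrib_left sum_distrib_right mult_ac intro!: sum.cong)
  also have "\<dots> = (\<Sum>a\<in>{1..n}. \<Sum>a'\<in>{1..n}. \<Sum>b'\<in>{1..n}. \<Sum>b\<in>{1..n}. x a * y a' * z b' * (c a' b' b * c a b h))"
    by (rule sum.cong[OF refl], rule sum_rotate3)
  finally show ?thesis
    by (simp add: sum_distrib_left)
qed

lemma jacobi_of_jacobi_sum:
  assumes J: "\<And>a b d h. a \<in> {1..n} \<Longrightarrow> b \<in> {1..n} \<Longrightarrow> d \<in> {1..n} \<Longrightarrow> h \<in> {1..n} \<Longrightarrow>
    jacobi_sum n c a b d h = 0"
  shows "lie_br n c x (lie_br n c y z) + lie_br n c y (lie_br n c z x) + lie_br n c z (lie_br n c x y) = 0"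
proof
  fix h
  show "(lie_br n c x (lie_br n c y z) + lie_br n c y (lie_br n c z x) + lie_br n c z (lie_br n c x y)) h = 0 h"
  proof (cases "h \<in> {1..n}")
    case False
    then show ?thesis by (simp add: lie_br_outside)
  next
    case True
    let ?I = "{1..n}"
    let ?K = "\<lambda>p q r. (\<Sum>b\<in>?I. c q r b * c p b h)"
    have "(lie_br n c x (lie_br n c y z) + lie_br n c y (lie_br n c z x) + lie_br n c z (lie_br n c x y)) h
      = (\<Sum>a\<in>?I. \<Sum>a'\<in>?I. \<Sum>b'\<in>?I. x a * y a' * z b' * ?K a a' b')
      + (\<Sum>a'\<in>?I. \<Sum>b'\<in>?I. \<Sum>a\<in>?I. y a' * z b' * x a * ?K a' b' a)
      + (\<Sum>b'\<in>?I. \<Sum>a\<in>?I. \<Sum>a'\<in>?I. z b' * x a * y a' * ?K b' a a')"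
      by (simp only: plus_fun_apply lie_br_lie_br_expand[OF True])
    also have "\<dots> = (\<Sum>a\<in>?I. \<Sum>a'\<in>?I. \<Sum>b'\<in>?I. x a * y a' * z b' * (?K a a' b' + ?K a' b' a + ?K b' a a'))"
      using sum_rotate3[of "\<lambda>a a' b'. x a * y a' * z b' * ?K a' b' a" ?I ?I ?I]
        sum_rotate3[of "\<lambda>b' a a'. x a * y a' * z b' * ?K b' a a'" ?I ?I ?I]
      by (simp add: sum.distrib distrib_left mult_ac)
    also have "\<dots> = 0"
      using J True by (simp add: jacobi_sum_def sum.distrib[symmetric] add_ac mult_ac)
    finally show ?thesis by simp
  qed
qed

lemma is_lie_algebraI:
  assumes antisym: "\<And>a b h. c a b h = - c b a h"
    and sorted: "\<And>a b d h. a \<in> {1..n} \<Longrightarrow> b \<in> {1..n} \<Longrightarrow> d \<in> {1..n} \<Longrightarrow> h \<in> {1..n} \<Longrightarrow>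
      a < b \<Longrightarrow> b < d \<Longrightarrow> jacobi_sum n c a b d h = 0"
  shows "is_lie_algebra n c"
  unfolding is_lie_algebra_def
proof (intro conjI ballI)
  show "lie_br n c x x = 0" for x
    using lie_br_antisym[of c, OF antisym, of n x x] by (simp add: fun_eq_iff)
  show "lie_br n c x (lie_br n c y z) + lie_br n c y (lie_br n c z x) + lie_br n c z (lie_br n c x y) = 0"
    for x y z
    by (rule jacobi_of_jacobi_sum, rule jacobi_sum_eq_0_of_sorted[OF antisym]) (use sorted in auto)
qed

section \<open>The model algebra\<close>

text \<open>Every nonzero structure constant of the model has \<open>e\<^sub>1\<close> as an argument, while no
  bracket has an \<open>e\<^sub>1\<close>-component.\<close>

lemma model_derived_abelian:
  "lie_br n (model n) (lie_br n (model n) p q) (lie_br n (model n) r s) = 0"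
proof -
  have model_1: "lie_br n (model n) u v (Suc 0) = 0" for u v
    by (auto simp: lie_br_def model_def intro!: sum.neutral)
  have model_supp: "model n a b h \<noteq> 0 \<Longrightarrow> a = 1 \<or> b = 1" for a b h
    by (simp add: model_def split: if_splits)
  have "lie_br n (model n) w w' = 0" if "w (Suc 0) = 0" "w' (Suc 0) = 0" for w w'
  proof -
    have "w a * w' b * model n a b h = 0" for a b h
      using that model_supp[of a b h] by (cases "model n a b h = 0") auto
    then show ?thesis
      by (simp add: lie_br_def fun_eq_iff del: mult_eq_0_iff)
  qed
  then show ?thesis
    using model_1 by blast
qed

lemma lie_iso_model_derived_abelian:
  assumes "lie_iso n c (model n)" "p \<in> Vn n" "q \<in> Vn n" "r \<in> Vn n" "s \<in> Vn n"
  shows "lie_br n c (lie_br n c p q) (lie_br n c r s) = 0"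
proof -
  obtain f where bij: "bij_betw f (Vn n) (Vn n)"
    and add: "\<forall>x\<in>Vn n. \<forall>y\<in>Vn n. f (x + y) = f x + f y"
    and br: "\<forall>x\<in>Vn n. \<forall>y\<in>Vn n. f (lie_br n c x y) = lie_br n (model n) (f x) (f y)"
    using assms(1) unfolding lie_iso_def by blast
  have "f 0 = 0"
    using add zero_in_Vn by (metis add.right_neutral add_left_imp_eq)
  then have "f (lie_br n c (lie_br n c p q) (lie_br n c r s)) = f 0"
    using br assms(2-5) lie_br_in_Vn model_derived_abelian by metis
  then show ?thesis
    using bij lie_br_in_Vn zero_in_Vn unfolding bij_betw_def inj_on_def by blast
qed

lemma brs_lcs_Vn: "1 \<le> k \<Longrightarrow> brs n c (lcs n c k) (Vn n) = lcs n c (Suc k)"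
  by (cases k) auto

section \<open>The general law for the triple (4,5,8)\<close>

lemma vect_eqI_le8:
  "(\<And>h. h \<le> 8 \<Longrightarrow> f h = g h) \<Longrightarrow> (\<And>h. 8 < h \<Longrightarrow> f h = g h) \<Longrightarrow> f = (g :: vect)"
  by (metis ext not_le)

lemma le8_cases: "(h::nat) \<le> 8 \<Longrightarrow> h=0 \<or> h=1 \<or> h=2 \<or> h=3 \<or> h=4 \<or> h=5 \<or> h=6 \<or> h=7 \<or> h=8"
  by arith

lemma in_1_8_iff: "a \<in> {1..8::nat} \<longleftrightarrow> a=1 \<or> a=2 \<or> a=3 \<or> a=4 \<or> a=5 \<or> a=6 \<or> a=7 \<or> a=8"
  by auto

lemma sum_Suc0_8: "(\<Sum>j\<in>{Suc 0..8}. f j) = f 1 + f 2 + f 3 + f 4 + f 5 + f 6 + f 7 + f 8"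
  by (simp add: numeral_eq_Suc atLeastAtMostSuc_conv add_ac)

definition vec_from_e2 :: "complex list \<Rightarrow> vect" where
  "vec_from_e2 xs h = (if 2 \<le> h \<and> h - 2 < length xs then xs ! (h - 2) else 0)"

lemma vec_from_e2_eq_0_iff: "vec_from_e2 xs = 0 \<longleftrightarrow> (\<forall>x\<in>set xs. x = 0)"
proof -
  have "(\<forall>h. (if 2 \<le> h \<and> h - 2 < length xs then xs ! (h - 2) else 0) = 0) \<longleftrightarrow> (\<forall>i<length xs. xs ! i = 0)"
  proof
    assume vanish: "\<forall>h. (if 2 \<le> h \<and> h - 2 < length xs then xs ! (h - 2) else 0) = 0"
    show "\<forall>i<length xs. xs ! i = 0"
    proof (intro allI impI)
      fix i
      assume "i < length xs"
      then show "xs ! i = 0"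
        using vanish[rule_format, of "i + 2"] by simp
    qed
  qed auto
  then show ?thesis
    by (simp add: vec_from_e2_def fun_eq_iff all_set_conv_all_nth)
qed

text \<open>The brackets \<open>[e\<^sub>a, e\<^sub>b]\<close>, \<open>a < b\<close>, of the general law for the triple (4,5,8), with the
  recursively defined brackets \<open>[e\<^sub>4\<^sub>+\<^sub>k, e\<^sub>5\<^sub>+\<^sub>l]\<close> unfolded.\<close>

definition law458_bracket :: "complex \<Rightarrow> complex \<Rightarrow> complex \<Rightarrow> complex \<Rightarrow> complex \<Rightarrow> complex
    \<Rightarrow> complex \<Rightarrow> complex \<Rightarrow> complex \<Rightarrow> nat \<Rightarrow> nat \<Rightarrow> vect" where
  "law458_bracket a1 a2 g1 g2 b12 b22 b13 b23 b33 a b =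
    (if a = 1 then (if 3 \<le> b \<and> b \<le> 8 then ev (b - 1) else 0)
     else if a = 4 \<and> b = 6 then vec_from_e2 [a1]
     else if a = 5 \<and> b = 6 then vec_from_e2 [a2, a1]
     else if a = 4 \<and> b = 7 then vec_from_e2 [g1, a1]
     else if a = 4 \<and> b = 8 then vec_from_e2 [g2, g1, a1]
     else if a = 5 \<and> b = 7 then vec_from_e2 [b12, g1+a2, 2*a1]
     else if a = 6 \<and> b = 7 then vec_from_e2 [b22, b12, g1+a2, 2*a1]
     else if a = 5 \<and> b = 8 then vec_from_e2 [b13, g2+b12, 2*g1+a2, 3*a1]
     else if a = 6 \<and> b = 8 then vec_from_e2 [b23, b13+b22, g2+2*b12, 3*g1+2*a2, 5*a1]
     else if a = 7 \<and> b = 8 then vec_from_e2 [b33, b23, b13+b22, g2+2*b12, 3*g1+2*a2, 5*a1]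
     else 0)"

definition law458_sc :: "complex \<Rightarrow> complex \<Rightarrow> complex \<Rightarrow> complex \<Rightarrow> complex \<Rightarrow> complex \<Rightarrow> complex
    \<Rightarrow> complex \<Rightarrow> complex \<Rightarrow> sconst" where
  "law458_sc a1 a2 g1 g2 b12 b22 b13 b23 b33 a b h =
    (if a < b then law458_bracket a1 a2 g1 g2 b12 b22 b13 b23 b33 a b h
     else if b < a then - law458_bracket a1 a2 g1 g2 b12 b22 b13 b23 b33 b a h else 0)"

lemma law458_sc_antisym: "law458_sc a1 a2 g1 g2 b12 b22 b13 b23 b33 a b h
    = - law458_sc a1 a2 g1 g2 b12 b22 b13 b23 b33 b a h"
  by (simp add: law458_sc_def)

lemma law458_sc_zero_eq_model:
  "a \<in> {1..8} \<Longrightarrow> b \<in> {1..8} \<Longrightarrow> h \<in> {1..8} \<Longrightarrow> law458_sc 0 0 0 0 0 0 0 0 0 a b h = model 8 a b h"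
  unfolding in_1_8_iff
  by (elim disjE) (simp_all add: law458_sc_def law458_bracket_def model_def vec_from_e2_def ev_apply)

lemma law_rec_apply: "law_rec B k l b h' =
   (if 3 \<le> h' \<and> h' \<le> k + l + 1 then (B (4+k-1) (5+l) + B (4+k) (5+l-1)) (h' - 1) else 0)
   + (if h' = 2 then b else 0)"
proof -
  have "(\<Sum>h\<in>{2..k+l}. fscale ((B (4+k-1) (5+l) + B (4+k) (5+l-1)) h) (ev (h+1)) h')
     = (\<Sum>h\<in>{2..k+l}. if h = h' - 1 \<and> h' \<ge> 1 then (B (4+k-1) (5+l) + B (4+k) (5+l-1)) h else 0)"
    by (rule sum.cong) (auto simp: ev_apply fscale_apply)
  also have "\<dots> = (if 3 \<le> h' \<and> h' \<le> k + l + 1 then (B (4+k-1) (5+l) + B (4+k) (5+l-1)) (h' - 1) else 0)"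
    by (cases "1 \<le> h'") (simp_all add: sum.delta, linarith)
  finally show ?thesis
    by (simp add: law_rec_def sum_fun_apply ev_apply fscale_apply)
qed

context
  fixes c :: sconst and a1 a2 g1 g2 b12 b22 b13 b23 b33 :: complex
  assumes lie: "is_lie_algebra 8 c" and adp: "adapted 8 c"
    and law: "law458 c a1 a2 g1 g2 b12 b22 b13 b23 b33"
begin

lemma law458_nonzero_brackets:
  "lie_br 8 c (ev 4) (ev 6) = vec_from_e2 [a1]"
  "lie_br 8 c (ev 5) (ev 6) = vec_from_e2 [a2, a1]"
  "lie_br 8 c (ev 4) (ev 7) = vec_from_e2 [g1, a1]"
  "lie_br 8 c (ev 4) (ev 8) = vec_from_e2 [g2, g1, a1]"
  "lie_br 8 c (ev 5) (ev 7) = vec_from_e2 [b12, g1+a2, 2*a1]"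
  "lie_br 8 c (ev 6) (ev 7) = vec_from_e2 [b22, b12, g1+a2, 2*a1]"
  "lie_br 8 c (ev 5) (ev 8) = vec_from_e2 [b13, g2+b12, 2*g1+a2, 3*a1]"
  "lie_br 8 c (ev 6) (ev 8) = vec_from_e2 [b23, b13+b22, g2+2*b12, 3*g1+2*a2, 5*a1]"
  "lie_br 8 c (ev 7) (ev 8) = vec_from_e2 [b33, b23, b13+b22, g2+2*b12, 3*g1+2*a2, 5*a1]"
proof -
  let ?B = "\<lambda>a b. lie_br 8 c (ev a) (ev b)"
  note L = law[unfolded law458_def Let_def]
  have "?B 4 6 = fscale a1 (ev 2)" "?B 5 6 = fscale a1 (ev 3) + fscale a2 (ev 2)"
    "?B 4 7 = fscale a1 (ev 3) + fscale g1 (ev 2)"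
    "?B 4 8 = fscale a1 (ev 4) + fscale g1 (ev 3) + fscale g2 (ev 2)"
    using L by simp_all
  then show B46: "?B 4 6 = vec_from_e2 [a1]" and B56: "?B 5 6 = vec_from_e2 [a2, a1]"
    and B47: "?B 4 7 = vec_from_e2 [g1, a1]" and B48: "?B 4 8 = vec_from_e2 [g2, g1, a1]"
    by (auto intro!: vect_eqI_le8 dest!: le8_cases simp: vec_from_e2_def fscale_apply ev_apply)
  have B66: "?B 6 6 = 0" and B77: "?B 7 7 = 0"
    using lie ev_in_Vn unfolding is_lie_algebra_def by auto
  have "?B 5 7 = law_rec ?B 1 2 b12" "?B 6 7 = law_rec ?B 2 2 b22" "?B 5 8 = law_rec ?B 1 3 b13"
    "?B 6 8 = law_rec ?B 2 3 b23" "?B 7 8 = law_rec ?B 3 3 b33"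
    using L by simp_all
  note rec = this[THEN fun_cong, unfolded law_rec_apply]
  show B57: "?B 5 7 = vec_from_e2 [b12, g1+a2, 2*a1]"
    by (intro vect_eqI_le8) (auto dest!: le8_cases simp: rec B47 B56 vec_from_e2_def lie_br_outside)
  show B67: "?B 6 7 = vec_from_e2 [b22, b12, g1+a2, 2*a1]"
    by (intro vect_eqI_le8) (auto dest!: le8_cases simp: rec B57 B66 vec_from_e2_def lie_br_outside)
  show B58: "?B 5 8 = vec_from_e2 [b13, g2+b12, 2*g1+a2, 3*a1]"
    by (intro vect_eqI_le8) (auto dest!: le8_cases simp: rec B48 B57 vec_from_e2_def lie_br_outside)
  show B68: "?B 6 8 = vec_from_e2 [b23, b13+b22, g2+2*b12, 3*g1+2*a2, 5*a1]"
    by (intro vect_eqI_le8) (auto dest!: le8_cases simp: rec B58 B67 vec_from_e2_def lie_br_outside)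
  show "?B 7 8 = vec_from_e2 [b33, b23, b13+b22, g2+2*b12, 3*g1+2*a2, 5*a1]"
    by (intro vect_eqI_le8) (auto dest!: le8_cases simp: rec B68 B77 vec_from_e2_def lie_br_outside)
qed

lemma law458_brackets:
  assumes "a \<in> {1..8}" "b \<in> {1..8}" "a < b"
  shows "lie_br 8 c (ev a) (ev b) = law458_bracket a1 a2 g1 g2 b12 b22 b13 b23 b33 a b"
proof -
  let ?B = "\<lambda>a b. lie_br 8 c (ev a) (ev b)"
  note L = law[unfolded law458_def Let_def]
  have "?B 1 h = ev (h - 1)" if "3 \<le> h" "h \<le> 8" for h
    using L that by simp
  then have e1: "?B (Suc 0) h = ev (h - 1)" if "3 \<le> h" "h \<le> 8" for h
    using that by simp
  have "?B 2 1 = 0"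
    using adp by (simp add: adapted_def)
  then have e12: "?B (Suc 0) 2 = 0"
    using lie_br_antisym_of_lie[OF lie, of "ev 1" "ev 2"] by (simp add: ev_in_Vn)
  have zero: "?B a b = 0" if "2 \<le> a" "a < b" "b \<le> 8"
    "(a, b) \<notin> {(4,6),(5,6),(4,7),(4,8),(5,7),(6,7),(5,8),(6,8),(7,8)}" for a b
    using L that by simp
  show ?thesis
    using assms unfolding in_1_8_iff
    by (elim disjE) (simp_all add: law458_nonzero_brackets zero e1 e12 law458_bracket_def)
qed

lemma law458_sc_eq:
  assumes "a \<in> {1..8}" "b \<in> {1..8}" "h \<in> {1..8}"
  shows "c a b h = law458_sc a1 a2 g1 g2 b12 b22 b13 b23 b33 a b h"
proof -
  have upper: "c a b h = law458_bracket a1 a2 g1 g2 b12 b22 b13 b23 b33 a b h"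
    if "a \<in> {1..8}" "b \<in> {1..8}" "a < b" for a b
    using law458_brackets[OF that] lie_br_ev_ev[of a 8 b c h] that assms(3) by (simp add: fun_eq_iff)
  consider "a < b" | "b < a" | "a = b" by arith
  then show ?thesis
  proof cases
    case 1
    then show ?thesis using upper assms by (simp add: law458_sc_def)
  next
    case 2
    then show ?thesis using upper[of b a] sc_antisym[OF lie assms] assms by (simp add: law458_sc_def)
  next
    case 3
    then show ?thesis using sc_alternating[OF lie] assms by (simp add: law458_sc_def)
  qed
qed

lemma jacobi_sum_law458_sc:
  assumes "a \<in> {1..8}" "b \<in> {1..8}" "d \<in> {1..8}" "h \<in> {1..8}"
  shows "jacobi_sum 8 (law458_sc a1 a2 g1 g2 b12 b22 b13 b23 b33) a b d h = 0"
proof -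
  have "jacobi_sum 8 (law458_sc a1 a2 g1 g2 b12 b22 b13 b23 b33) a b d h = jacobi_sum 8 c a b d h"
    unfolding jacobi_sum_def by (rule sum.cong) (use assms in \<open>simp_all add: law458_sc_eq\<close>)
  then show ?thesis
    using jacobi_sum_eq_0[OF lie assms] by simp
qed

lemma law458_alpha1: "a1 = 0"
proof -
  have "6 * a1^2 = 0"
    using jacobi_sum_law458_sc[of 4 6 8 2]
    by (simp add: jacobi_sum_def sum_Suc0_8 law458_sc_def law458_bracket_def vec_from_e2_def power2_eq_square)
  then show ?thesis by simp
qed

lemma law458_alpha2: "a2 = - g1"
proof -
  have "2 * (a2 + g1)^2 = 0"
    using jacobi_sum_law458_sc[of 5 7 8 2] law458_alpha1
    by (simp add: jacobi_sum_def sum_Suc0_8 law458_sc_def law458_bracket_def vec_from_e2_def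
        power2_eq_square algebra_simps)
  then show ?thesis by (simp add: add_eq_0_iff)
qed

lemma law458_gamma: "g1 * (2 * g2 + 5 * b12) = 0"
  using jacobi_sum_law458_sc[of 6 7 8 2] law458_alpha1 law458_alpha2
  by (simp add: jacobi_sum_def sum_Suc0_8 law458_sc_def law458_bracket_def vec_from_e2_def algebra_simps)

end

section \<open>The normal form\<close>

text \<open>The general law after imposing the Jacobi relations \<open>\<alpha>\<^sub>1 = 0\<close>, \<open>\<alpha>\<^sub>2 = -\<gamma>\<^sub>1\<close>,
  \<open>\<gamma>\<^sub>2 = -5/2 \<beta>\<^sub>1\<^sub>2\<close>.\<close>

definition sc458 :: "complex \<Rightarrow> complex \<Rightarrow> complex \<Rightarrow> complex \<Rightarrow> complex \<Rightarrow> complex \<Rightarrow> sconst" where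
  "sc458 g1 b12 b22 b13 b23 b33 = law458_sc 0 (-g1) g1 (-(5/2)*b12) b12 b22 b13 b23 b33"

lemma sc458_antisym: "sc458 g1 b12 b22 b13 b23 b33 a b h = - sc458 g1 b12 b22 b13 b23 b33 b a h"
  unfolding sc458_def by (rule law458_sc_antisym)

lemmas sc458_simps = sc458_def law458_sc_def law458_bracket_def vec_from_e2_def ev_apply

lemma sc458_support:
  assumes "a \<in> {1..8}" "b \<in> {1..8}" "h \<in> {1..8}" "sc458 g1 b12 b22 b13 b23 b33 a b h \<noteq> 0"
  shows "(a = 1 \<and> h + 1 = b \<and> b \<ge> 3) \<or> (b = 1 \<and> h + 1 = a \<and> a \<ge> 3) \<or>
    (2 \<le> a \<and> 2 \<le> b \<and> h = 2 \<and> a + b \<ge> 11) \<or>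
    ((a = 6 \<and> b = 7 \<or> a = 7 \<and> b = 6) \<and> h = 3 \<and> b12 \<noteq> 0) \<or>
    ((a = 8 \<or> b = 8) \<and> 2 \<le> h \<and> h < a \<and> h < b)"
  using assms unfolding in_1_8_iff
  by (elim disjE) (simp_all add: sc458_simps)

lemma jacobi_sum_sc458_sorted:
  assumes "a \<in> {1..8}" "b \<in> {1..8}" "d \<in> {1..8}" "h \<in> {1..8}" "a < b" "b < d"
  shows "jacobi_sum 8 (sc458 g1 b12 b22 b13 b23 b33) a b d h = 0"
  using assms unfolding in_1_8_iff
  by (elim disjE) (simp_all add: jacobi_sum_def sum_Suc0_8 sc458_simps algebra_simps)

lemma is_lie_algebra_sc458: "is_lie_algebra 8 (sc458 g1 b12 b22 b13 b23 b33)"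
  by (intro is_lie_algebraI sc458_antisym jacobi_sum_sc458_sorted)

text \<open>In the normal form \<open>C\<^sup>k\<close> and \<open>[C\<^sup>k, C\<^sup>l]\<close> are spanned by the \<open>e\<^sub>h\<close> with \<open>h\<close> in these sets.\<close>

definition lcs_index :: "nat \<Rightarrow> nat set" where
  "lcs_index k = (if k \<le> 1 then {1..8} else {2..9-k})"

definition brs_lcs_index :: "complex \<Rightarrow> nat \<Rightarrow> nat \<Rightarrow> nat set" where
  "brs_lcs_index b12 k l = (if 8 \<le> k + l then {} else if 6 \<le> k + l \<or> b12 = 0 then {2} else {2, 3})"

context
  fixes g1 b12 b22 b13 b23 b33 :: complex
begin

abbreviation (input) "T \<equiv> sc458 g1 b12 b22 b13 b23 b33"

lemma sc458_brackets:
  "lie_br 8 T (ev 4) (ev 5) = 0"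
  "lie_br 8 T (ev 4) (ev 7) = fscale g1 (ev 2)"
  "lie_br 8 T (ev 7) (ev 4) = fscale (-g1) (ev 2)"
  "lie_br 8 T (ev 5) (ev 6) = fscale (-g1) (ev 2)"
  "lie_br 8 T (ev 6) (ev 5) = fscale g1 (ev 2)"
  "lie_br 8 T (ev 6) (ev 7) = fscale b22 (ev 2) + fscale b12 (ev 3)"
  "lie_br 8 T (ev 4) (ev 8) 3 = g1"
  by (rule vect_eqI_le8; auto dest!: le8_cases simp: lie_br_ev_ev lie_br_outside sc458_simps fscale_apply)+
    (simp add: lie_br_ev_ev sc458_simps)

lemma sc458_e1_bracket: "3 \<le> h \<Longrightarrow> h \<le> 8 \<Longrightarrow> lie_br 8 T (ev 1) (ev h) = ev (h - 1)"
  by (rule ext) (auto simp: lie_br_ev_ev sc458_simps)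

lemma sc458_bracket_e1: "2 \<le> r \<Longrightarrow> r \<le> 7 \<Longrightarrow> lie_br 8 T (ev (r + 1)) (ev 1) = fscale (-1) (ev r)"
  by (rule ext) (auto simp: lie_br_ev_ev sc458_simps fscale_apply)

lemma adapted_sc458: "adapted 8 T"
  unfolding adapted_def
proof (intro conjI allI impI)
  show "lie_br 8 T (ev 1) (ev h) = ev (h - 1)" if "3 \<le> h \<and> h \<le> 8" for h
    using that by (intro sc458_e1_bracket) simp_all
  show "lie_br 8 T (ev 2) (ev h) = 0" if "1 \<le> h \<and> h \<le> 8" for h
    using that le8_cases[of h] by (elim conjE disjE; intro ext; simp add: lie_br_ev_ev sc458_simps)
  show "lie_br 8 T (ev 3) (ev h) = 0" if "2 \<le> h \<and> h \<le> 8" for h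
    using that le8_cases[of h] by (elim conjE disjE; intro ext; simp add: lie_br_ev_ev sc458_simps)
qed

lemma law458_sc458: "law458 T 0 (-g1) g1 (-(5/2)*b12) b12 b22 b13 b23 b33"
  unfolding law458_def Let_def
proof (intro conjI allI impI)
  show "lie_br 8 T (ev 1) (ev h) = ev (h - 1)" if "3 \<le> h \<and> h \<le> 8" for h
    using that by (intro sc458_e1_bracket) simp_all
  show "lie_br 8 T (ev a) (ev b) = 0"
    if "2 \<le> a \<and> a < b \<and> b \<le> 8 \<and>
        (a, b) \<notin> {(4, 6), (5, 6), (4, 7), (4, 8), (5, 7), (6, 7), (5, 8), (6, 8), (7, 8)}" for a b
  proof -
    have "a \<in> {1..8}" "b \<in> {1..8}" using that by auto
    then show ?thesis
      using that unfolding in_1_8_iff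
      by (elim disjE; intro ext; simp add: lie_br_ev_ev sc458_simps)
  qed
qed (rule vect_eqI_le8, (drule le8_cases, elim disjE; simp add: lie_br_ev_ev law_rec_apply sc458_simps
    fscale_apply), simp add: lie_br_outside law_rec_apply fscale_apply ev_apply)+

lemma z1_sc458:
  assumes "g1 \<noteq> 0"
  shows "z1 8 T = 4"
  unfolding z1_def
proof (rule Least_equality)
  have "lie_br 8 T (ev 4) (ev 8) \<noteq> 0"
    using sc458_brackets(7) assms by (metis zero_fun_apply)
  then show "4 \<le> (4::nat) \<and> lie_br 8 T (ev 4) (ev 8) \<noteq> 0" by simp
qed simp

lemma z2_sc458: "g1 \<noteq> 0 \<Longrightarrow> z2 8 T = 5"
  unfolding z2_def using sc458_brackets(1,4)
  by (intro Least_equality) (auto simp: fun_eq_iff fscale_apply ev_apply le_Suc_eq dest: le_antisym)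

lemma non_model_sc458:
  assumes "g1 \<noteq> 0"
  shows "non_model 8 T"
  unfolding non_model_def
proof
  assume "lie_iso 8 T (model 8)"
  then have "lie_br 8 T (lie_br 8 T (ev 1) (ev 6)) (lie_br 8 T (ev 1) (ev 7)) = 0"
    by (rule lie_iso_model_derived_abelian) (simp_all add: ev_in_Vn)
  moreover have "lie_br 8 T (ev 1) (ev 6) = ev 5" "lie_br 8 T (ev 1) (ev 7) = ev 6"
    using sc458_e1_bracket[of 6] sc458_e1_bracket[of 7] by simp_all
  ultimately have "lie_br 8 T (ev 5) (ev 6) = 0"
    by simp
  then show False
    using assms sc458_brackets(4) by (metis fscale_apply ev_apply mult_1_right neg_equal_0_iff_equal zero_fun_apply)
qed

lemma sc458_lcs_support:
  assumes "a \<in> lcs_index (Suc m)" "b \<in> {1..8}" "h \<in> {1..8}" "h \<notin> lcs_index (Suc (Suc m))"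
  shows "T a b h = 0"
proof (rule ccontr)
  assume "T a b h \<noteq> 0"
  moreover have "a \<in> {1..8}"
    using assms(1) by (auto simp: lcs_index_def split: if_splits)
  ultimately have supp: "(a = 1 \<and> h + 1 = b \<and> b \<ge> 3) \<or> (b = 1 \<and> h + 1 = a \<and> a \<ge> 3) \<or>
    (2 \<le> a \<and> 2 \<le> b \<and> h = 2 \<and> a + b \<ge> 11) \<or>
    ((a = 6 \<and> b = 7 \<or> a = 7 \<and> b = 6) \<and> h = 3 \<and> b12 \<noteq> 0) \<or>
    ((a = 8 \<or> b = 8) \<and> 2 \<le> h \<and> h < a \<and> h < b)"
    using sc458_support assms(2,3) by blast
  have "(m = 0 \<and> 1 \<le> a \<and> a \<le> 8) \<or> (m \<noteq> 0 \<and> 2 \<le> a \<and> a \<le> 8 - m)"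
    "\<not> (2 \<le> h \<and> h \<le> 7 - m)"
    using assms by (auto simp: lcs_index_def split: if_splits)
  then show False
    using supp assms(2,3) by auto
qed

lemma lcs_sc458: "lcs 8 T k = fv.span (ev ` lcs_index k)"
proof (induction k rule: nat_less_induct)
  case (1 k)
  consider "k = 0" | "k = 1" | m where "k = Suc (Suc m)"
    by (metis One_nat_def not0_implies_Suc)
  then show ?case
  proof cases
    case 3
    have "lcs 8 T k = brs 8 T (fv.span (ev ` lcs_index (Suc m))) (fv.span (ev ` {1..8}))"
      using 1 3 by (simp add: Vn_eq_span_ev)
    also have "\<dots> = fv.span {lie_br 8 T x y | x y. x \<in> ev ` lcs_index (Suc m) \<and> y \<in> ev ` {1..8}}"
      by (rule brs_span_span)
    also have "\<dots> = fv.span (ev ` lcs_index k)"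
    proof (rule span_brackets_ev_eq)
      show "finite (lcs_index k)" "lcs_index (Suc m) \<subseteq> {1..8}" "{1..8} \<subseteq> {1..8::nat}"
        by (auto simp: lcs_index_def)
      show "T a b h = 0"
        if "a \<in> lcs_index (Suc m)" "b \<in> {1..8}" "h \<in> {1..8}" "h \<notin> lcs_index k" for a b h
        using sc458_lcs_support that unfolding 3 by blast
      show "ev r \<in> fv.span {lie_br 8 T x y | x y. x \<in> ev ` lcs_index (Suc m) \<and> y \<in> ev ` {1..8}}"
        if "r \<in> lcs_index k" for r
        using that 3 by (intro ev_in_span_brackets[OF _ _ sc458_bracket_e1]) (auto simp: lcs_index_def)
    qed
    finally show ?thesis .
  qed (auto simp: lcs_index_def Vn_eq_span_ev)
qed

lemma filiform_sc458: "filiform 8 T"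
  by (simp add: filiform_def dim_Vn lcs_sc458 dim_ev_image lcs_index_def)

lemma ev2_in_brackets_sc458:
  assumes "g1 \<noteq> 0" "2 \<le> k" "2 \<le> l" "k + l \<le> 7"
  shows "ev 2 \<in> fv.span {lie_br 8 T x y | x y. x \<in> ev ` {2..9-k} \<and> y \<in> ev ` {2..9-l}}"
proof -
  consider "k = 2" | "k = 3" | "k = 4" | "k = 5"
    using assms by arith
  then show ?thesis
  proof cases
    case 1
    then show ?thesis
      using assms by (intro ev_in_span_brackets[OF _ _ sc458_brackets(3)]) auto
  next
    case 2
    then show ?thesis
      using assms by (intro ev_in_span_brackets[OF _ _ sc458_brackets(5)]) auto
  next
    case 3
    then show ?thesis
      using assms by (intro ev_in_span_brackets[OF _ _ sc458_brackets(4)]) auto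
  next
    case 4
    then show ?thesis
      using assms by (intro ev_in_span_brackets[OF _ _ sc458_brackets(2)]) auto
  qed
qed

lemma ev3_in_brackets_sc458:
  assumes "g1 \<noteq> 0" "b12 \<noteq> 0" "2 \<le> k" "2 \<le> l" "k + l \<le> 5"
  shows "ev 3 \<in> fv.span {lie_br 8 T x y | x y. x \<in> ev ` {2..9-k} \<and> y \<in> ev ` {2..9-l}}"
    (is "_ \<in> fv.span ?G")
proof -
  have "lie_br 8 T (ev 6) (ev 7) \<in> fv.span ?G"
  proof (cases "l = 2")
    case True
    have "ev 6 \<in> ev ` {2..9-k}" "ev 7 \<in> ev ` {2..9-l}"
      using assms True by auto
    then show ?thesis
      by (blast intro: fv.span_base)
  next
    case False
    have "ev 7 \<in> ev ` {2..9-k}" "ev 6 \<in> ev ` {2..9-l}"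
      using assms False by auto
    then have "- lie_br 8 T (ev 7) (ev 6) \<in> fv.span ?G"
      by (blast intro: fv.span_neg fv.span_base)
    then show ?thesis
      using lie_br_antisym[of T, OF sc458_antisym, of 8 "ev 6" "ev 7"] by simp
  qed
  then have s1: "fscale b22 (ev 2) + fscale b12 (ev 3) \<in> fv.span ?G"
    by (simp only: sc458_brackets)
  have s2: "fscale b22 (ev 2) \<in> fv.span ?G"
    using ev2_in_brackets_sc458 assms by (intro fv.span_scale) simp
  have "(fscale b22 (ev 2) + fscale b12 (ev 3)) - fscale b22 (ev 2) \<in> fv.span ?G"
    by (rule fv.span_diff[OF s1 s2])
  then have "fscale b12 (ev 3) \<in> fv.span ?G"
    by simp
  then have "fscale (1/b12) (fscale b12 (ev 3)) \<in> fv.span ?G"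
    by (rule fv.span_scale)
  then show ?thesis
    using assms(2) by (simp add: fscale_def)
qed

lemma sc458_brs_lcs_support:
  assumes kl: "2 \<le> k" "2 \<le> l"
    and "a \<in> {2..9-k}" "b \<in> {2..9-l}" "h \<in> {1..8}" "h \<notin> brs_lcs_index b12 k l"
  shows "T a b h = 0"
proof (rule ccontr)
  assume "T a b h \<noteq> 0"
  moreover have ab: "a \<in> {1..8}" "b \<in> {1..8}" "a \<noteq> 1" "b \<noteq> 1" "a \<noteq> 8" "b \<noteq> 8"
    using assms by auto
  ultimately have "h = 2 \<and> a + b \<ge> 11 \<or> h = 3 \<and> a + b = 13 \<and> b12 \<noteq> 0"
    using sc458_support[of a b h g1 b12 b22 b13 b23 b33, OF ab(1,2) assms(5)] ab(3-6) by auto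
  moreover have "a + b + k + l \<le> 18"
    using assms by auto
  ultimately show False
    using assms(6) by (auto simp: brs_lcs_index_def split: if_splits)
qed

lemma brs_lcs_sc458:
  assumes g1: "g1 \<noteq> 0" and kl: "2 \<le> k" "2 \<le> l"
  shows "brs 8 T (lcs 8 T k) (lcs 8 T l) = fv.span (ev ` brs_lcs_index b12 k l)"
proof -
  have "brs 8 T (lcs 8 T k) (lcs 8 T l)
      = fv.span {lie_br 8 T x y | x y. x \<in> ev ` {2..9-k} \<and> y \<in> ev ` {2..9-l}}"
    using kl by (simp add: lcs_sc458 lcs_index_def brs_span_span)
  also have "\<dots> = fv.span (ev ` brs_lcs_index b12 k l)"
  proof (rule span_brackets_ev_eq)
    show "finite (brs_lcs_index b12 k l)"
      by (simp add: brs_lcs_index_def)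
    show "{2..9-k} \<subseteq> {1..8::nat}" "{2..9-l} \<subseteq> {1..8::nat}"
      using kl by auto
    show "T a b h = 0"
      if "a \<in> {2..9-k}" "b \<in> {2..9-l}" "h \<in> {1..8}" "h \<notin> brs_lcs_index b12 k l" for a b h
      using sc458_brs_lcs_support[OF kl that] .
    show "ev r \<in> fv.span {lie_br 8 T x y | x y. x \<in> ev ` {2..9-k} \<and> y \<in> ev ` {2..9-l}}"
      if "r \<in> brs_lcs_index b12 k l" for r
    proof -
      have "r = 2 \<and> k + l \<le> 7 \<or> r = 3 \<and> k + l \<le> 5 \<and> b12 \<noteq> 0"
        using that by (auto simp: brs_lcs_index_def split: if_splits)
      then show ?thesis
        using ev2_in_brackets_sc458[OF g1 kl] ev3_in_brackets_sc458[OF g1 _ kl] by auto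
    qed
  qed
  finally show ?thesis .
qed

context
  assumes g1: "g1 \<noteq> 0"
begin

lemma fil458_sc458: "fil458 T 0 (-g1) g1 (-(5/2)*b12) b12 b22 b13 b23 b33"
  using g1 law458_sc458
  by (simp add: fil458_def is_lie_algebra_sc458 filiform_sc458 adapted_sc458 non_model_sc458 z1_sc458 z2_sc458)

lemma HP_sc458_apply:
  "HP 8 T k l - HP0 8 k l = (if 2 \<le> k \<and> 2 \<le> l then int (card (brs_lcs_index b12 k l)) else 0)"
proof -
  have dim_lcs: "fv.dim (lcs 8 T (Suc k)) = 7 - k" if "1 \<le> k" for k
    using that by (simp add: lcs_sc458 dim_ev_image lcs_index_def)
  consider "k = 0 \<or> l = 0" | "1 \<le> k \<and> l = 1" | "k = 1 \<and> 2 \<le> l" | "2 \<le> k \<and> 2 \<le> l"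
    by arith
  then show ?thesis
  proof cases
    case 1
    then show ?thesis by (auto simp: HP_def HP0_def)
  next
    case 2
    then have "l = Suc 0" "1 \<le> k" by auto
    then have "HP 8 T k l = int (7 - k)"
      by (simp del: lcs.simps add: HP_def brs_lcs_Vn dim_lcs lcs.simps(2))
    then show ?thesis
      using 2 by (auto simp: HP0_def)
  next
    case 3
    then have "brs 8 T (lcs 8 T k) (lcs 8 T l) = lcs 8 T (Suc l)"
      using brs_commute[of T, OF sc458_antisym, of 8 "Vn 8"] brs_lcs_Vn[of l] by simp
    then have "HP 8 T k l = int (7 - l)"
      using 3 by (simp add: HP_def dim_lcs del: lcs.simps)
    then show ?thesis
      using 3 by (auto simp: HP0_def)
  next
    case 4
    then show ?thesis
      by (simp add: HP_def HP0_def brs_lcs_sc458[OF g1] dim_ev_image brs_lcs_index_def del: lcs.simps)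
  qed
qed

lemma HP_sc458:
  "let cc = (if b12 \<noteq> 0 then 2 else 1 :: int) in
     HP 8 T - HP0 8 =
       (\<lambda>k l. cc * (mon 2 2 + mon 2 3 + mon 3 2) k l)
       + (mon 2 4 + mon 3 3 + mon 4 2)
       + (mon 2 5 + mon 3 4 + mon 4 3 + mon 5 2)"
  unfolding Let_def
proof (intro ext)
  fix k l :: nat
  show "(HP 8 T - HP0 8) k l = ((\<lambda>k l. (if b12 \<noteq> 0 then 2 else 1 :: int) * (mon 2 2 + mon 2 3 + mon 3 2) k l)
       + (mon 2 4 + mon 3 3 + mon 4 2) + (mon 2 5 + mon 3 4 + mon 4 3 + mon 5 2)) k l"
  proof (cases "k \<le> 5 \<and> l \<le> 5")
    case True
    then have "k = 0 \<or> k = 1 \<or> k = 2 \<or> k = 3 \<or> k = 4 \<or> k = 5"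
      "l = 0 \<or> l = 1 \<or> l = 2 \<or> l = 3 \<or> l = 4 \<or> l = 5"
      by arith+
    then show ?thesis
      by (elim disjE; simp add: HP_sc458_apply mon_def brs_lcs_index_def)
  next
    case False
    then have "8 \<le> k + l \<or> k < 2 \<or> l < 2"
      by auto
    moreover have "mon i j k l = 0" if "i \<le> 5" "j \<le> 5" for i j
      using False that by (auto simp: mon_def)
    ultimately show ?thesis
      by (auto simp: HP_sc458_apply brs_lcs_index_def)
  qed
qed

lemma lower_central_brackets_sc458:
  "brs 8 T (lcs 8 T 3) (lcs 8 T 3) = fv.span {ev 2}
    \<and> brs 8 T (lcs 8 T 3) (lcs 8 T 4) = fv.span {ev 2}
    \<and> brs 8 T (lcs 8 T 3) (lcs 8 T 5) = {0}
    \<and> brs 8 T (lcs 8 T 2) (lcs 8 T 2) = fv.span {ev 2, fscale b12 (ev 3)}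
    \<and> brs 8 T (lcs 8 T 2) (lcs 8 T 3) = fv.span {ev 2, fscale b12 (ev 3)}
    \<and> brs 8 T (lcs 8 T 2) (lcs 8 T 4) = fv.span {ev 2}
    \<and> brs 8 T (lcs 8 T 2) (lcs 8 T 5) = fv.span {ev 2}
    \<and> brs 8 T (lcs 8 T 2) (lcs 8 T 6) = {0}"
  using brs_lcs_sc458[OF g1] by (simp add: span_ev2_scaled_ev3 brs_lcs_index_def del: lcs.simps)

end

end

section \<open>Reduction to the normal form\<close>

context
  fixes c :: sconst and a1 a2 g1 g2 b12 b22 b13 b23 b33 :: complex
  assumes lie: "is_lie_algebra 8 c" and adp: "adapted 8 c"
    and law: "law458 c a1 a2 g1 g2 b12 b22 b13 b23 b33"
    and nm: "non_model 8 c" and tz2: "z2 8 c = 5"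
begin

lemma law458_gamma1: "g1 \<noteq> 0"
proof
  assume g0: "g1 = 0"
  have a1: "a1 = 0" and a2: "a2 = 0"
    using law458_alpha1[OF lie adp law] law458_alpha2[OF lie adp law] g0 by simp_all
  let ?P = "\<lambda>k. 4 \<le> k \<and> lie_br 8 c (ev k) (ev (k + 1)) \<noteq> 0"
  have "lie_br 8 c (ev 5) (ev 6) = 0"
    using law458_nonzero_brackets(2)[OF lie adp law] a1 a2 by (simp add: vec_from_e2_eq_0_iff)
  then have "\<not> ?P 5" by simp
  \<comment> \<open>\<open>LEAST\<close> of an empty predicate is arbitrary: \<open>tz2\<close> forces \<open>?P 5\<close> only if some \<open>?P k\<close> holds\<close>
  then have "\<not> (\<exists>k. ?P k)"
    using tz2 LeastI_ex[of ?P] by (auto simp: z2_def)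
  then have "lie_br 8 c (ev k) (ev (k + 1)) = 0" if "4 \<le> k" for k
    using that by blast
  from this[of 6] this[of 7] have "lie_br 8 c (ev 6) (ev 7) = 0" "lie_br 8 c (ev 7) (ev 8) = 0"
    by simp_all
  then have "vec_from_e2 [b22, b12, g1+a2, 2*a1] = 0"
    "vec_from_e2 [b33, b23, b13+b22, g2+2*b12, 3*g1+2*a2, 5*a1] = 0"
    using law458_nonzero_brackets(6,9)[OF lie adp law] by simp_all
  then have "b22 = 0" "b12 = 0" "b33 = 0" "b23 = 0" "b13 = 0" "g2 = 0"
    by (auto simp: vec_from_e2_eq_0_iff)
  then have "lie_iso 8 c (model 8)"
    using law458_sc_eq[OF lie adp law] law458_sc_zero_eq_model a1 a2 g0 by (intro lie_iso_of_sc_eq) simp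
  then show False
    using nm by (simp add: non_model_def)
qed

lemma law458_gamma2: "g2 = - (5/2) * b12"
proof -
  have "2 * g2 + 5 * b12 = 0"
    using law458_gamma[OF lie adp law] law458_gamma1 by simp
  then show ?thesis
    by (simp add: field_simps eq_neg_iff_add_eq_0)
qed

lemma lie_br_eq_sc458: "lie_br 8 c = lie_br 8 (sc458 g1 b12 b22 b13 b23 b33)"
  using law458_sc_eq[OF lie adp law] law458_alpha1[OF lie adp law] law458_alpha2[OF lie adp law]
    law458_gamma2 by (intro lie_br_cong) (simp add: sc458_def)

end

section \<open>Two non-isomorphic algebras\<close>

lemma derived_bracket_sc458_b12_zero:
  assumes "g1 \<noteq> 0" "p \<in> Vn 8" "q \<in> Vn 8" "r \<in> Vn 8" "s \<in> Vn 8"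
  shows "lie_br 8 (sc458 g1 0 b22 b13 b23 b33) (lie_br 8 (sc458 g1 0 b22 b13 b23 b33) p q)
           (lie_br 8 (sc458 g1 0 b22 b13 b23 b33) r s) \<in> fv.span {ev 2}"
proof -
  let ?Y = "sc458 g1 0 b22 b13 b23 b33"
  have "lie_br 8 ?Y p q \<in> lcs 8 ?Y 2" "lie_br 8 ?Y r s \<in> lcs 8 ?Y 2"
    using assms by (auto simp: numeral_2_eq_2 brs_def intro: fv.span_base)
  then have "lie_br 8 ?Y (lie_br 8 ?Y p q) (lie_br 8 ?Y r s) \<in> brs 8 ?Y (lcs 8 ?Y 2) (lcs 8 ?Y 2)"
    unfolding brs_def by (blast intro: fv.span_base)
  then show ?thesis
    using brs_lcs_sc458[OF assms(1), of 2 2 0] by (simp add: brs_lcs_index_def del: lcs.simps)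
qed

text \<open>In the first algebra both \<open>e\<^sub>2\<close> and \<open>e\<^sub>3\<close> are brackets of two brackets, in the second all
  such elements are multiples of \<open>e\<^sub>2\<close>; an isomorphism would map two independent vectors into a line.\<close>

lemma sc458_b12_one_not_iso_b12_zero: "\<not> lie_iso 8 (sc458 1 1 0 0 0 0) (sc458 1 0 0 0 0 0)"
proof
  let ?X = "sc458 1 1 0 0 0 0" and ?Y = "sc458 1 0 0 0 0 0"
  assume "lie_iso 8 ?X ?Y"
  then obtain f where bij: "bij_betw f (Vn 8) (Vn 8)"
    and add: "\<forall>x\<in>Vn 8. \<forall>y\<in>Vn 8. f (x + y) = f x + f y"
    and scale: "\<forall>x\<in>Vn 8. \<forall>a. f (fscale a x) = fscale a (f x)"
    and br: "\<forall>x\<in>Vn 8. \<forall>y\<in>Vn 8. f (lie_br 8 ?X x y) = lie_br 8 ?Y (f x) (f y)"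
    unfolding lie_iso_def by blast
  have f_ev: "f (ev (h - 1)) = lie_br 8 ?Y (f (ev 1)) (f (ev h))" if "3 \<le> h" "h \<le> 8" for h
    using br ev_in_Vn sc458_e1_bracket[OF that] that by (metis atLeastAtMost_iff le_numeral_extra(4) one_le_numeral order.trans)
  have derived: "f (lie_br 8 ?X (ev a) (ev (a + 1))) \<in> fv.span {ev 2}" if "5 \<le> a" "a \<le> 6" for a
  proof -
    have "f (lie_br 8 ?X (ev a) (ev (a + 1)))
        = lie_br 8 ?Y (lie_br 8 ?Y (f (ev 1)) (f (ev (a + 1)))) (lie_br 8 ?Y (f (ev 1)) (f (ev (a + 2))))"
      using br ev_in_Vn f_ev[of "a + 1"] f_ev[of "a + 2"] that by simp
    moreover have "f x \<in> Vn 8" if "x \<in> Vn 8" for x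
      using bij that by (auto simp: bij_betw_def)
    ultimately show ?thesis
      using derived_bracket_sc458_b12_zero[of 1] ev_in_Vn that by simp
  qed
  have "f (fscale (-1) (ev 2)) \<in> fv.span {ev 2}"
    using derived[of 5] sc458_brackets(4)[of 1 1 0 0 0 0] by simp
  moreover have "f (fscale (-1) (ev 2)) = fscale (-1) (f (ev 2))"
    by (rule scale[rule_format]) (simp add: ev_in_Vn)
  ultimately have "fscale (-1) (f (ev 2)) \<in> fv.span {ev 2}"
    by simp
  then have "fscale (-1) (fscale (-1) (f (ev 2))) \<in> fv.span {ev 2}"
    by (rule fv.span_scale)
  then have "f (ev 2) \<in> fv.span {ev 2}"
    by (simp add: fscale_def)
  moreover have "f (ev 3) \<in> fv.span {ev 2}"
    using derived[of 6] sc458_brackets(6)[of 1 1 0 0 0 0] by simp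
  ultimately show False
    using bij add scale by (intro linear_inj_on_Vn_not_two_ev_into_line[of f 8 2 3 "ev 2"]) (auto simp: bij_betw_def)
qed

lemma two_nonisomorphic_fil458:
  "\<exists>c1 p1 p2 p3 p4 p5 p6 p7 p8 p9 c2 q1 q2 q3 q4 q5 q6 q7 q8 q9.
     fil458 c1 p1 p2 p3 p4 p5 p6 p7 p8 p9 \<and> p5 \<noteq> 0 \<and>
     fil458 c2 q1 q2 q3 q4 q5 q6 q7 q8 q9 \<and> q5 = 0 \<and>
     HP 8 c1 \<noteq> HP 8 c2 \<and> \<not> lie_iso 8 c1 c2"
proof (intro exI conjI)
  show "fil458 (sc458 1 1 0 0 0 0) 0 (-1) 1 (-(5/2)*1) 1 0 0 0 0"
    using fil458_sc458[of 1 1 0 0 0 0] by simp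
  show "fil458 (sc458 1 0 0 0 0 0) 0 (-1) 1 (-(5/2)*0) 0 0 0 0 0"
    using fil458_sc458[of 1 0 0 0 0 0] by simp
  show "HP 8 (sc458 1 1 0 0 0 0) \<noteq> HP 8 (sc458 1 0 0 0 0 0)"
  proof
    assume "HP 8 (sc458 1 1 0 0 0 0) = HP 8 (sc458 1 0 0 0 0 0)"
    then show False
      using HP_sc458_apply[of 1 1 0 0 0 0 2 2] HP_sc458_apply[of 1 0 0 0 0 0 2 2]
      by (simp add: brs_lcs_index_def)
  qed
  show "\<not> lie_iso 8 (sc458 1 1 0 0 0 0) (sc458 1 0 0 0 0 0)"
    by (rule sc458_b12_one_not_iso_b12_zero)
qed simp_all

theorem mainTheorem17:
  fixes c :: sconst
    and a1 a2 g1 g2 b12 b22 b13 b23 b33 :: complex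
  assumes lie: "is_lie_algebra 8 c"
    and fil: "filiform 8 c"
    and adp: "adapted 8 c"
    and nm: "non_model 8 c"
    and tz1: "z1 8 c = 4"
    and tz2: "z2 8 c = 5"
    and law: "law458 c a1 a2 g1 g2 b12 b22 b13 b23 b33"
  shows "a1 = 0 \<and> a2 = - g1 \<and> g2 = - (5/2) * b12 \<and> g1 \<noteq> 0
    \<and> brs 8 c (lcs 8 c 3) (lcs 8 c 3) = fv.span {ev 2}
    \<and> brs 8 c (lcs 8 c 3) (lcs 8 c 4) = fv.span {ev 2}
    \<and> brs 8 c (lcs 8 c 3) (lcs 8 c 5) = {0}
    \<and> brs 8 c (lcs 8 c 2) (lcs 8 c 2) = fv.span {ev 2, fscale b12 (ev 3)}
    \<and> brs 8 c (lcs 8 c 2) (lcs 8 c 3) = fv.span {ev 2, fscale b12 (ev 3)}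
    \<and> brs 8 c (lcs 8 c 2) (lcs 8 c 4) = fv.span {ev 2}
    \<and> brs 8 c (lcs 8 c 2) (lcs 8 c 5) = fv.span {ev 2}
    \<and> brs 8 c (lcs 8 c 2) (lcs 8 c 6) = {0}
    \<and> (let cc = (if b12 \<noteq> 0 then 2 else 1 :: int) in
         HP 8 c - HP0 8 =
           (\<lambda>k l. cc * (mon 2 2 + mon 2 3 + mon 3 2) k l)
           + (mon 2 4 + mon 3 3 + mon 4 2)
           + (mon 2 5 + mon 3 4 + mon 4 3 + mon 5 2))
    \<and> (\<exists>c1 p1 p2 p3 p4 p5 p6 p7 p8 p9 c2 q1 q2 q3 q4 q5 q6 q7 q8 q9.
         fil458 c1 p1 p2 p3 p4 p5 p6 p7 p8 p9 \<and> p5 \<noteq> 0 \<and>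
         fil458 c2 q1 q2 q3 q4 q5 q6 q7 q8 q9 \<and> q5 = 0 \<and>
         HP 8 c1 \<noteq> HP 8 c2 \<and> \<not> lie_iso 8 c1 c2)"
proof -
  have g1: "g1 \<noteq> 0"
    by (rule law458_gamma1[OF lie adp law nm tz2])
  have params: "a1 = 0" "a2 = - g1" "g2 = - (5/2) * b12"
    using law458_alpha1[OF lie adp law] law458_alpha2[OF lie adp law] law458_gamma2[OF lie adp law nm tz2]
    by simp_all
  note same = lcs_brs_HP_cong[OF lie_br_eq_sc458[OF lie adp law nm tz2]]
  show ?thesis
    unfolding same
    using g1 params lower_central_brackets_sc458[OF g1, of b12 b22 b13 b23 b33]
      HP_sc458[OF g1, of b12 b22 b13 b23 b33] two_nonisomorphic_fil458
    by (elim conjE) (intro conjI; assumption)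
qed

end
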